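(* (1) If $a_t\in HKa_sK$ for some $s>0$, then $|t|\le s$. (2) Given any $\epsilon>0$, there exists $T_0=T_0(\epsilon)$ such that $$\{k\in K: a_tk\in HKA^+\text{ for some }t>T_0\}\subset K_\epsilon M.$$
   Context: $G=\mathrm{PSL}_2(\mathbb C)$, $K=\mathrm{PSU}(2)$, $a_t=\mathrm{diag}(e^{t/2},e^{-t/2})$, $A^+=\{a_t:t\ge0\}$, $M=\{\mathrm{diag}(e^{i\theta},e^{-i\theta}):\theta\in\mathbb R\}$, $H$ is the stabilizer in $G$ of the unit circle $C_0$ centered at $0$ (equivalently of its convex hull, the unit hemisphere in $\mathbb H^3$). A left-invariant metric on $G$ is fixed; $U_\epsilon$ is the $\epsilon$-ball around $e$ and $K_\epsilon=K\cap U_\epsilon$. *)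

theory Defs
  imports "HOL-Analysis.Analysis"
begin

text \<open>Elements of G = PSL_2(C) are represented by matrices in SL_2(C); the
matrices g and -g represent the same element of G.\<close>

type_synonym cmat = "complex^2^2"

definition mk2 :: "complex \<Rightarrow> complex \<Rightarrow> complex \<Rightarrow> complex \<Rightarrow> cmat" where
  "mk2 a b c d = (\<chi> i j. if i = 1 then (if j = 1 then a else b) else (if j = 1 then c else d))"

definition SL2 :: "cmat set" where
  "SL2 = {g. det g = 1}"

definition conj_transpose :: "cmat \<Rightarrow> cmat" where
  "conj_transpose g = (\<chi> i j. cnj (g $ j $ i))"

text \<open>Preimage of K = PSU(2) in SL_2(C), i.e. SU(2).\<close>
definition Kgrp :: "cmat set" where
  "Kgrp = {g \<in> SL2. g ** conj_transpose g = mat 1}"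

definition a_t :: "real \<Rightarrow> cmat" where
  "a_t t = mk2 (complex_of_real (exp (t/2))) 0 0 (complex_of_real (exp (-t/2)))"

definition Aplus :: "cmat set" where
  "Aplus = {a_t t | t. t \<ge> 0}"

definition Mgrp :: "cmat set" where
  "Mgrp = {mk2 (exp (\<i> * complex_of_real \<theta>)) 0 0 (exp (- \<i> * complex_of_real \<theta>)) | \<theta>. True}"

text \<open>Moebius action: g = [[a,b],[c,d]] sends z to (az+b)/(cz+d); the value is
\<infinity> when cz+d = 0.\<close>
definition moeb_finite :: "cmat \<Rightarrow> complex \<Rightarrow> bool" where
  "moeb_finite g z \<longleftrightarrow> g$2$1 * z + g$2$2 \<noteq> 0"

definition moeb :: "cmat \<Rightarrow> complex \<Rightarrow> complex" where
  "moeb g z = (g$1$1 * z + g$1$2) / (g$2$1 * z + g$2$2)"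

text \<open>Preimage of H, the stabilizer of the unit circle C_0 (a set of finite points
of the Riemann sphere): g maps C_0 onto C_0.\<close>
definition Hgrp :: "cmat set" where
  "Hgrp = {g \<in> SL2.
     (\<forall>z. cmod z = 1 \<longrightarrow> moeb_finite g z \<and> cmod (moeb g z) = 1) \<and>
     (\<forall>w. cmod w = 1 \<longrightarrow> (\<exists>z. cmod z = 1 \<and> moeb_finite g z \<and> moeb g z = w))}"

definition setmul :: "cmat set \<Rightarrow> cmat set \<Rightarrow> cmat set" (infixl "\<cdot>\<cdot>" 70) where
  "A \<cdot>\<cdot> B = {x ** y | x y. x \<in> A \<and> y \<in> B}"

text \<open>Membership in PSL_2(C): the class of g lies in the image of S.\<close>
definition pmem :: "cmat \<Rightarrow> cmat set \<Rightarrow> bool" where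
  "pmem g S \<longleftrightarrow> g \<in> S \<or> - g \<in> S"

text \<open>A left-invariant metric on G = PSL_2(C) (written on representatives),
inducing the Lie group topology of G.\<close>
definition psl_left_inv_metric :: "(cmat \<Rightarrow> cmat \<Rightarrow> real) \<Rightarrow> bool" where
  "psl_left_inv_metric dG \<longleftrightarrow>
     (\<forall>g\<in>SL2. \<forall>h\<in>SL2.
        dG g h = dG (- g) h \<and> dG g h = dG h g \<and>
        (dG g h = 0 \<longleftrightarrow> (g = h \<or> g = - h)) \<and>
        (\<forall>x\<in>SL2. dG (x ** g) (x ** h) = dG g h)) \<and>
     (\<forall>g\<in>SL2. \<forall>h\<in>SL2. \<forall>l\<in>SL2. dG g l \<le> dG g h + dG h l) \<and>
     (\<forall>\<epsilon>>0. \<exists>\<delta>>0. \<forall>h\<in>SL2. norm (h - mat 1) < \<delta> \<longrightarrow> dG (mat 1) h < \<epsilon>) \<and>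
     (\<forall>\<delta>>0. \<exists>\<epsilon>>0. \<forall>h\<in>SL2. dG (mat 1) h < \<epsilon> \<longrightarrow>
        norm (h - mat 1) < \<delta> \<or> norm (h + mat 1) < \<delta>)"

definition Keps :: "(cmat \<Rightarrow> cmat \<Rightarrow> real) \<Rightarrow> real \<Rightarrow> cmat set" where
  "Keps dG \<epsilon> = {k \<in> Kgrp. dG (mat 1) k < \<epsilon>}"

end

theory Submission
  imports Defs
begin

text \<open>With \<open>J = diag(1,-1)\<close>, the unit circle is the null set of the Hermitian form of \<open>J\<close>, so every
\<open>h \<in> H\<close> satisfies \<open>h\<^sup>* J h = \<plusminus>J\<close>. Hence \<open>\<rho>(g) = tr(J g g\<^sup>*)\<close>, the difference of the squared
row norms of \<open>g\<close>, is invariant under \<open>K\<close> on the right and changes at most its sign under \<open>H\<close>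
on the left, while \<open>\<rho>(a\<^sub>t) = 2 sinh t\<close>. For (1), \<open>a\<^sub>t \<in> HKa\<^sub>sK\<close> gives
\<open>\<bar>2 sinh t\<bar> = \<bar>\<rho>(k a\<^sub>s)\<bar> \<le> 2 sinh \<bar>s\<bar>\<close>. For (2), \<open>a\<^sub>t k \<in> HKa\<^sub>s\<close> with \<open>s \<ge> 0\<close> forces
\<open>\<rho>(a\<^sub>t k a\<^sub>-\<^sub>s) = \<plusminus>\<rho>(k') = 0\<close>; written out, this bounds the off-diagonal entry of \<open>k\<close> by \<open>e\<^sup>-\<^sup>t\<close>,
and such a \<open>k\<close> is \<open>k\<^sub>1 m\<close> with \<open>m \<in> M\<close> and \<open>\<parallel>k\<^sub>1 - 1\<parallel> \<le> 4 e\<^sup>-\<^sup>t\<close>.\<close>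

lemma cmat_mult_nth: "((A::cmat) ** B)$i$j = A$i$1 * B$1$j + A$i$2 * B$2$j"
  by (simp add: matrix_matrix_mult_def sum_2)

lemma cmat_eq_iff:
  "(A::cmat) = B \<longleftrightarrow> A$1$1 = B$1$1 \<and> A$1$2 = B$1$2 \<and> A$2$1 = B$2$1 \<and> A$2$2 = B$2$2"
  by (simp add: vec_eq_iff forall_2)

lemma mk2_nth [simp]:
  "mk2 a b c d $1$1 = a" "mk2 a b c d $1$2 = b" "mk2 a b c d $2$1 = c" "mk2 a b c d $2$2 = d"
  by (simp_all add: mk2_def)

lemma mat_1_nth [simp]:
  "(mat 1::cmat)$1$1 = 1" "(mat 1::cmat)$1$2 = 0" "(mat 1::cmat)$2$1 = 0" "(mat 1::cmat)$2$2 = 1"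
  by (simp_all add: mat_def)

lemma conj_transpose_nth [simp]: "conj_transpose g $i$j = cnj (g$j$i)"
  by (simp add: conj_transpose_def)

lemma a_t_nth [simp]:
  "a_t t $1$1 = of_real (exp (t/2))" "a_t t $1$2 = 0" "a_t t $2$1 = 0"
  "a_t t $2$2 = of_real (exp (-t/2))"
  by (simp_all add: a_t_def)

lemma matrix_mul_lneg: "(- A :: 'a::ring_1^'n^'m) ** B = - (A ** B)"
  by (simp add: matrix_matrix_mult_def vec_eq_iff sum_negf)

lemma a_t_mult: "a_t s ** a_t u = a_t (s + u)"
  unfolding cmat_eq_iff cmat_mult_nth by (simp add: add_divide_distrib flip: of_real_mult exp_add)

lemma a_t_0: "a_t 0 = mat 1"
  unfolding cmat_eq_iff by simp

lemma conj_transpose_mult: "conj_transpose (A ** B) = conj_transpose B ** conj_transpose A"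
  unfolding cmat_eq_iff by (simp add: cmat_mult_nth mult.commute)

lemma norm_cmat_le: "norm (A::cmat) \<le> cmod (A$1$1) + cmod (A$1$2) + cmod (A$2$1) + cmod (A$2$2)"
proof -
  have row: "norm (A$i) \<le> cmod (A$i$1) + cmod (A$i$2)" for i
    using L2_set_le_sum[of UNIV "\<lambda>j. cmod (A$i$j)"] by (simp add: norm_vec_def sum_2)
  have "norm A \<le> norm (A$1) + norm (A$2)"
    using L2_set_le_sum[of UNIV "\<lambda>i. norm (A$i)"] by (simp add: norm_vec_def sum_2)
  then show ?thesis using row[of 1] row[of 2] by simp
qed

lemma cmod_mult_add_square:
  "(cmod (a*z + b))^2 = (cmod a * cmod z)^2 + (cmod b)^2 + 2 * Re (a * cnj b * z)"
proof -
  have "complex_of_real ((cmod (a*z + b))^2) = a*cnj a*(z*cnj z) + b*cnj b + (a*cnj b*z + cnj (a*cnj b*z))"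
    unfolding complex_norm_square by (simp add: algebra_simps)
  also have "\<dots> = complex_of_real ((cmod a * cmod z)^2 + (cmod b)^2 + 2 * Re (a * cnj b * z))"
    unfolding complex_add_cnj of_real_add power_mult_distrib of_real_mult complex_norm_square by simp
  finally show ?thesis by (simp only: of_real_eq_iff)
qed

lemma Kgrp_iff:
  "k \<in> Kgrp \<longleftrightarrow> k$1$1 * k$2$2 - k$1$2 * k$2$1 = 1 \<and>
     k$1$1 * cnj (k$1$1) + k$1$2 * cnj (k$1$2) = 1 \<and>
     k$1$1 * cnj (k$2$1) + k$1$2 * cnj (k$2$2) = 0 \<and>
     k$2$1 * cnj (k$2$1) + k$2$2 * cnj (k$2$2) = 1"
proof -
  have "k$2$1 * cnj (k$1$1) + k$2$2 * cnj (k$1$2) = cnj (k$1$1 * cnj (k$2$1) + k$1$2 * cnj (k$2$2))"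
    by simp
  then have "k$2$1 * cnj (k$1$1) + k$2$2 * cnj (k$1$2) = 0 \<longleftrightarrow> k$1$1 * cnj (k$2$1) + k$1$2 * cnj (k$2$2) = 0"
    by (metis complex_cnj_zero_iff)
  then show ?thesis
    unfolding Kgrp_def SL2_def det_2 cmat_eq_iff cmat_mult_nth conj_transpose_nth mat_1_nth by auto
qed

lemma Kgrp_mult: "k \<in> Kgrp \<Longrightarrow> l \<in> Kgrp \<Longrightarrow> k ** l \<in> Kgrp"
  unfolding Kgrp_def SL2_def
  by (simp add: det_mul conj_transpose_mult matrix_mul_assoc flip: matrix_mul_assoc[of k])

lemma Kgrp_entries:
  assumes "k \<in> Kgrp"
  shows "k$2$2 = cnj (k$1$1)" "k$2$1 = - cnj (k$1$2)"
proof -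
  define \<alpha> \<beta> \<gamma> \<delta> where "\<alpha> = k$1$1" "\<beta> = k$1$2" "\<gamma> = k$2$1" "\<delta> = k$2$2"
  from assms have unit: "\<alpha> * cnj \<alpha> + \<beta> * cnj \<beta> = 1" and det: "\<alpha>*\<delta> - \<beta>*\<gamma> = 1"
    and orth: "\<gamma> * cnj \<alpha> + \<delta> * cnj \<beta> = 0"
    unfolding Kgrp_iff \<alpha>_\<beta>_\<gamma>_\<delta>_def by (auto dest: arg_cong[of _ 0 cnj] simp: mult.commute)
  have "\<delta> - cnj \<alpha> = -\<delta>*(\<alpha> * cnj \<alpha> + \<beta> * cnj \<beta> - 1) + cnj \<alpha>*(\<alpha>*\<delta> - \<beta>*\<gamma> - 1) + \<beta>*(\<gamma> * cnj \<alpha> + \<delta> * cnj \<beta>)"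
    by (simp add: algebra_simps)
  then show "k$2$2 = cnj (k$1$1)" using unit det orth by (simp add: \<alpha>_\<beta>_\<gamma>_\<delta>_def)
  have "\<gamma> + cnj \<beta> = \<alpha>*(\<gamma> * cnj \<alpha> + \<delta> * cnj \<beta>) - \<gamma>*(\<alpha> * cnj \<alpha> + \<beta> * cnj \<beta> - 1) - cnj \<beta>*(\<alpha>*\<delta> - \<beta>*\<gamma> - 1)"
    by (simp add: algebra_simps)
  then show "k$2$1 = - cnj (k$1$2)" using unit det orth by (simp add: \<alpha>_\<beta>_\<gamma>_\<delta>_def add_eq_0_iff)
qed

lemma Kgrp_norm_square: "k \<in> Kgrp \<Longrightarrow> (cmod (k$1$1))^2 + (cmod (k$1$2))^2 = 1"
  unfolding Kgrp_iff by (metis complex_norm_square of_real_add of_real_eq_1_iff)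

lemma Hgrp_entry_relations:
  assumes "h \<in> Hgrp"
  shows "h$1$1 * cnj (h$1$2) = h$2$1 * cnj (h$2$2)"
    and "h$1$1 * cnj (h$1$1) + h$1$2 * cnj (h$1$2) = h$2$1 * cnj (h$2$1) + h$2$2 * cnj (h$2$2)"
proof -
  define w where "w = h$1$1 * cnj (h$1$2) - h$2$1 * cnj (h$2$2)"
  define D where "D = (cmod (h$1$1))^2 + (cmod (h$1$2))^2 - (cmod (h$2$1))^2 - (cmod (h$2$2))^2"
  have circle: "D + 2 * Re (w * z) = 0" if "cmod z = 1" for z
  proof -
    from assms that have "cmod (h$1$1 * z + h$1$2) = cmod (h$2$1 * z + h$2$2)"
      unfolding Hgrp_def moeb_finite_def moeb_def by (auto simp: norm_divide)
    then have "(cmod (h$1$1 * z + h$1$2))^2 = (cmod (h$2$1 * z + h$2$2))^2"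
      by simp
    then show ?thesis
      unfolding cmod_mult_add_square D_def w_def left_diff_distrib minus_complex.sel
      using that by (simp add: algebra_simps)
  qed
  have "D = 0" "Re w = 0" using circle[of 1] circle[of "-1"] by auto
  moreover have "Im w = 0" using circle[of \<i>] \<open>D = 0\<close> by simp
  ultimately show "h$1$1 * cnj (h$1$2) = h$2$1 * cnj (h$2$2)"
    and "h$1$1 * cnj (h$1$1) + h$1$2 * cnj (h$1$2) = h$2$1 * cnj (h$2$1) + h$2$2 * cnj (h$2$2)"
    unfolding w_def D_def by (auto simp: complex_eq_iff simp flip: complex_norm_square of_real_add)
qed

text \<open>The difference below is the scalar \<open>x\<close> with \<open>h\<^sup>* J h = x J\<close>; comparing determinants gives
\<open>x\<^sup>2 = 1\<close>.\<close>

lemma Hgrp_column_norm_diff: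
  assumes "h \<in> Hgrp"
  shows "(cmod (h$1$1))^2 - (cmod (h$2$1))^2 \<in> {1, -1}"
proof -
  define a b c d where "a = h$1$1" "b = h$1$2" "c = h$2$1" "d = h$2$2"
  define x where "x = (cmod a)^2 - (cmod c)^2"
  have rel: "a * cnj b = c * cnj d" and rows: "a * cnj a + b * cnj b = c * cnj c + d * cnj d"
    using Hgrp_entry_relations[OF assms] unfolding a_b_c_d_def by simp_all
  have det: "a * d - b * c = 1"
    using assms unfolding Hgrp_def SL2_def det_2 a_b_c_d_def by simp
  have det': "cnj a * cnj d - cnj b * cnj c = 1"
    using arg_cong[OF det, of cnj] by simp
  have "(a*cnj a - c*cnj c)*(a*cnj a - c*cnj c) - 1
      = (a*cnj a - c*cnj c)*((a*cnj a + b*cnj b) - (c*cnj c + d*cnj d))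
        - (cnj a*b - cnj c*d)*(a*cnj b - c*cnj d) + (a*d - b*c)*(cnj a*cnj d - cnj b*cnj c) - 1"
    by (simp add: algebra_simps)
  also have "\<dots> = 0" using rel rows det det' by simp
  finally have "complex_of_real (x * x) = 1"
    unfolding x_def of_real_mult of_real_diff complex_norm_square by simp
  then have "x\<^sup>2 = 1" by (simp only: of_real_eq_1_iff power2_eq_square)
  then show ?thesis unfolding x_def a_b_c_d_def power2_eq_1_iff by simp
qed

definition row_norm_diff :: "cmat \<Rightarrow> real" where
  "row_norm_diff g = (norm (g$1))^2 - (norm (g$2))^2"

lemma norm_row_square: "(norm ((g::cmat)$i))^2 = (cmod (g$i$1))^2 + (cmod (g$i$2))^2"
  by (simp add: norm_vec_def L2_set_def sum_2)

lemma row_norm_diff_eq: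
  "row_norm_diff g = (cmod (g$1$1))^2 + (cmod (g$1$2))^2 - (cmod (g$2$1))^2 - (cmod (g$2$2))^2"
  unfolding row_norm_diff_def norm_row_square by simp

lemma of_real_row_norm_diff:
  "complex_of_real (row_norm_diff g) =
     g$1$1 * cnj (g$1$1) + g$1$2 * cnj (g$1$2) - g$2$1 * cnj (g$2$1) - g$2$2 * cnj (g$2$2)"
  unfolding row_norm_diff_eq by (simp flip: complex_norm_square)

lemma row_norm_diff_uminus [simp]: "row_norm_diff (- g) = row_norm_diff g"
  unfolding row_norm_diff_def by simp

lemma norm_row_mult_Kgrp:
  fixes g :: cmat
  assumes "k \<in> Kgrp"
  shows "norm ((g ** k)$i) = norm (g$i)"
proof -
  define x y \<alpha> \<beta> where "x = g$i$1" "y = g$i$2" "\<alpha> = k$1$1" "\<beta> = k$1$2"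
  have entries: "(g ** k)$i$1 = x * \<alpha> - y * cnj \<beta>" "(g ** k)$i$2 = x * \<beta> + y * cnj \<alpha>"
    unfolding cmat_mult_nth Kgrp_entries[OF assms] x_y_\<alpha>_\<beta>_def by simp_all
  have "complex_of_real ((norm ((g ** k)$i))^2)
      = (x * cnj x + y * cnj y) * (\<alpha> * cnj \<alpha> + \<beta> * cnj \<beta>)"
    unfolding norm_row_square of_real_add complex_norm_square entries by (simp add: algebra_simps)
  also have "\<dots> = complex_of_real ((norm (g$i))^2)"
    using assms unfolding Kgrp_iff norm_row_square x_y_\<alpha>_\<beta>_def of_real_add complex_norm_square
    by simp
  finally show ?thesis by (simp only: of_real_eq_iff power2_eq_iff_nonneg norm_ge_zero)
qed

lemma row_norm_diff_mult_Kgrp: "k \<in> Kgrp \<Longrightarrow> row_norm_diff (g ** k) = row_norm_diff g"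
  unfolding row_norm_diff_def by (simp add: norm_row_mult_Kgrp)

lemma row_norm_diff_Kgrp: "k \<in> Kgrp \<Longrightarrow> row_norm_diff k = 0"
  unfolding row_norm_diff_eq by (simp add: Kgrp_entries add.commute)

lemma row_norm_diff_mult_Hgrp:
  fixes g :: cmat
  assumes "h \<in> Hgrp"
  shows "row_norm_diff (h ** g) = ((cmod (h$1$1))^2 - (cmod (h$2$1))^2) * row_norm_diff g"
proof -
  define a b c d where "a = h$1$1" "b = h$1$2" "c = h$2$1" "d = h$2$2"
  have rel1: "a * cnj b = c * cnj d" and rows: "a * cnj a + b * cnj b = c * cnj c + d * cnj d"
    using Hgrp_entry_relations[OF assms] unfolding a_b_c_d_def by simp_all
  then have rel2: "b * cnj a = d * cnj c"
    by (metis complex_cnj_cnj complex_cnj_mult mult.commute)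
  have transfer: "(a*p+b*r)*(cnj a*P+cnj b*R) + (a*q+b*u)*(cnj a*Q+cnj b*U)
      - (c*p+d*r)*(cnj c*P+cnj d*R) - (c*q+d*u)*(cnj c*Q+cnj d*U)
      = (a*cnj a - c*cnj c)*(p*P + q*Q - r*R - u*U)" for p q r u P Q R U
  proof -
    \<comment> \<open>the coefficients on the right are the entries of \<open>h\<^sup>* J h - x J\<close>\<close>
    have "(a*p+b*r)*(cnj a*P+cnj b*R) + (a*q+b*u)*(cnj a*Q+cnj b*U)
        - (c*p+d*r)*(cnj c*P+cnj d*R) - (c*q+d*u)*(cnj c*Q+cnj d*U)
        - (a*cnj a - c*cnj c)*(p*P + q*Q - r*R - u*U)
      = (a*cnj b - c*cnj d)*(p*R+q*U) + (b*cnj a - d*cnj c)*(r*P+u*Q)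
        + ((a*cnj a+b*cnj b) - (c*cnj c+d*cnj d))*(r*R+u*U)"
      by (simp add: algebra_simps)
    then show ?thesis using rel1 rel2 rows by simp
  qed
  have "complex_of_real (row_norm_diff (h ** g))
      = complex_of_real (((cmod a)^2 - (cmod c)^2) * row_norm_diff g)"
    unfolding of_real_mult of_real_diff of_real_row_norm_diff complex_norm_square cmat_mult_nth
      complex_cnj_add complex_cnj_mult
    by (simp only: a_b_c_d_def[symmetric] transfer)
  then show ?thesis unfolding a_b_c_d_def of_real_eq_iff .
qed

lemma abs_row_norm_diff_mult_Hgrp:
  fixes g :: cmat
  assumes "h \<in> Hgrp"
  shows "\<bar>row_norm_diff (h ** g)\<bar> = \<bar>row_norm_diff g\<bar>"
  using Hgrp_column_norm_diff[OF assms] by (auto simp: row_norm_diff_mult_Hgrp[OF assms])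

lemma row_norm_diff_mult_a_t:
  "row_norm_diff (g ** a_t u) =
     ((cmod (g$1$1))^2 - (cmod (g$2$1))^2) * exp u + ((cmod (g$1$2))^2 - (cmod (g$2$2))^2) * exp (-u)"
proof -
  have "(exp (v/2))^2 = exp v" "(exp (-(v/2)))^2 = exp (-v)" for v :: real
    by (simp_all flip: exp_double)
  then show ?thesis
    unfolding row_norm_diff_eq cmat_mult_nth
    by (simp add: norm_mult power_mult_distrib algebra_simps)
qed

lemma row_norm_diff_a_t: "row_norm_diff (a_t t) = 2 * sinh t"
  using row_norm_diff_mult_a_t[of "mat 1" t] by (simp add: sinh_field_def)

lemma a_t_mult_nth:
  "(a_t t ** g)$1$j = of_real (exp (t/2)) * g$1$j" "(a_t t ** g)$2$j = of_real (exp (-t/2)) * g$2$j"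
  by (simp_all add: cmat_mult_nth)

lemma pmem_iff: "pmem g S \<longleftrightarrow> (\<exists>x\<in>S. g = x \<or> g = - x)"
  unfolding pmem_def by (metis minus_minus)

lemma abs_le_of_a_t_in_HKaK:
  assumes "pmem (a_t t) (Hgrp \<cdot>\<cdot> Kgrp \<cdot>\<cdot> {a_t s} \<cdot>\<cdot> Kgrp)"
  shows "\<bar>t\<bar> \<le> \<bar>s\<bar>"
proof -
  from assms obtain h k k' where h: "h \<in> Hgrp" and k: "k \<in> Kgrp" and k': "k' \<in> Kgrp"
    and "a_t t = h ** (k ** a_t s) ** k' \<or> a_t t = - (h ** (k ** a_t s) ** k')"
    unfolding pmem_iff setmul_def by (auto simp: matrix_mul_assoc)
  then have "\<bar>row_norm_diff (a_t t)\<bar> = \<bar>row_norm_diff (k ** a_t s)\<bar>"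
    using row_norm_diff_uminus row_norm_diff_mult_Kgrp[OF k'] abs_row_norm_diff_mult_Hgrp[OF h]
    by metis
  moreover have "row_norm_diff (k ** a_t s) = ((cmod (k$1$1))^2 - (cmod (k$1$2))^2) * (2 * sinh s)"
    by (simp add: row_norm_diff_mult_a_t Kgrp_entries[OF k] sinh_field_def field_simps)
  ultimately have "\<bar>sinh t\<bar> = \<bar>(cmod (k$1$1))^2 - (cmod (k$1$2))^2\<bar> * \<bar>sinh s\<bar>"
    by (simp add: row_norm_diff_a_t abs_mult)
  also have "\<dots> \<le> \<bar>sinh s\<bar>"
  proof (rule mult_left_le_one_le)
    show "\<bar>(cmod (k$1$1))^2 - (cmod (k$1$2))^2\<bar> \<le> 1"
      using Kgrp_norm_square[OF k] zero_le_power2[of "cmod (k$1$1)"] zero_le_power2[of "cmod (k$1$2)"]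
      unfolding abs_le_iff by linarith
  qed simp_all
  finally show ?thesis by (simp flip: sinh_real_abs)
qed

lemma row_norm_diff_vanishes_of_in_HKA:
  assumes "pmem g (Hgrp \<cdot>\<cdot> Kgrp \<cdot>\<cdot> Aplus)"
  shows "\<exists>s\<ge>0. row_norm_diff (g ** a_t (-s)) = 0"
proof -
  from assms obtain h k s where h: "h \<in> Hgrp" and k: "k \<in> Kgrp" and "s \<ge> 0"
    and "g = (h ** k) ** a_t s \<or> g = - ((h ** k) ** a_t s)"
    unfolding pmem_iff setmul_def Aplus_def by blast
  moreover have "X ** a_t s ** a_t (-s) = X" for X :: cmat
    by (simp add: a_t_mult a_t_0 flip: matrix_mul_assoc)
  ultimately have "g ** a_t (-s) = h ** k \<or> g ** a_t (-s) = - (h ** k)"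
    by (auto simp: matrix_mul_lneg)
  moreover have "row_norm_diff (h ** k) = 0"
    using abs_row_norm_diff_mult_Hgrp[OF h, of k] row_norm_diff_Kgrp[OF k] by simp
  ultimately show ?thesis
    using \<open>s \<ge> 0\<close> by auto
qed

lemma Kgrp_offdiag_le_of_a_t_in_HKA:
  assumes k: "k \<in> Kgrp" and "pmem (a_t t ** k) (Hgrp \<cdot>\<cdot> Kgrp \<cdot>\<cdot> Aplus)"
  shows "cmod (k$1$2) \<le> exp (-t)"
proof -
  obtain s where "s \<ge> 0" and "row_norm_diff ((a_t t ** k) ** a_t (-s)) = 0"
    using row_norm_diff_vanishes_of_in_HKA[OF assms(2)] by blast
  define A B where "A = (cmod (k$1$1))^2" "B = (cmod (k$1$2))^2"
  from \<open>row_norm_diff _ = 0\<close>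
  have "(exp t * A - exp (-t) * B) * exp (-s) + (exp t * B - exp (-t) * A) * exp s = 0"
    unfolding row_norm_diff_mult_a_t a_t_mult_nth A_B_def
    by (simp add: Kgrp_entries[OF k] norm_mult power_mult_distrib flip: exp_double)
  then have "0 = exp t * exp s * ((exp t * A - exp (-t) * B) * exp (-s) + (exp t * B - exp (-t) * A) * exp s)"
    by simp
  also have "\<dots> = exp t ^ 2 * A - B + (exp t ^ 2 * B - A) * exp s ^ 2"
    by (simp add: algebra_simps power2_eq_square flip: exp_add)
  finally have "exp t ^ 2 * B * exp s ^ 2 = A * exp s ^ 2 + B - exp t ^ 2 * A"
    by (simp add: algebra_simps)
  moreover have "B \<le> B * exp s ^ 2"
    using mult_left_mono[of 1 "exp s ^ 2" B] \<open>s \<ge> 0\<close> by (simp add: A_B_def)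
  moreover have "0 \<le> exp t ^ 2 * A" "A + B = 1"
    using Kgrp_norm_square[OF k] by (simp_all add: A_B_def)
  moreover have "A * exp s ^ 2 + B * exp s ^ 2 = exp s ^ 2"
    using \<open>A + B = 1\<close> by (metis distrib_right mult_1)
  ultimately have "exp t ^ 2 * B * exp s ^ 2 \<le> 1 * exp s ^ 2"
    by linarith
  then have "B \<le> exp (-t) ^ 2"
    by (simp add: exp_minus field_simps)
  then show ?thesis
    unfolding A_B_def by (rule power2_le_imp_le) simp
qed

lemma Mgrp_eq: "Mgrp = range (\<lambda>\<theta>. mk2 (cis \<theta>) 0 0 (cis (-\<theta>)))"
  unfolding Mgrp_def by (auto simp: cis_conv_exp)

lemma Mgrp_subset_Kgrp: "Mgrp \<subseteq> Kgrp"
  unfolding Mgrp_eq by (auto simp: Kgrp_iff cis_cnj cis_mult)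

lemma abs_diff_one_le_of_squares_sum_1:
  fixes x y :: real
  assumes "x\<^sup>2 + y\<^sup>2 = 1" "x \<ge> 0" "y \<ge> 0"
  shows "\<bar>x - 1\<bar> \<le> y"
proof -
  have "x \<le> 1"
  proof (rule power2_le_imp_le)
    show "x\<^sup>2 \<le> 1\<^sup>2"
      using assms(1) zero_le_power2[of y] unfolding power_one by linarith
  qed simp
  moreover have "1 \<le> x + y"
  proof (rule power2_le_imp_le)
    show "1\<^sup>2 \<le> (x + y)\<^sup>2"
      using assms by (simp add: power2_sum)
  qed (use assms in simp)
  ultimately show ?thesis by linarith
qed

lemma Kgrp_decomp_near_Mgrp:
  assumes k: "k \<in> Kgrp"
  shows "\<exists>k1 m. k1 \<in> Kgrp \<and> m \<in> Mgrp \<and> k = k1 ** m \<and> norm (k1 - mat 1) \<le> 4 * cmod (k$1$2)"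
proof -
  define \<alpha> \<beta> \<theta> where "\<alpha> = k$1$1" "\<beta> = k$1$2" "\<theta> = Arg (k$1$1)"
  define m m' where "m = mk2 (cis \<theta>) 0 0 (cis (-\<theta>))" "m' = mk2 (cis (-\<theta>)) 0 0 (cis \<theta>)"
  define k1 where "k1 = k ** m'"
  have m: "m \<in> Mgrp" and m': "m' \<in> Mgrp"
    unfolding Mgrp_eq m_m'_def by (auto intro: range_eqI[of _ _ "-\<theta>"])
  have "k1 \<in> Kgrp"
    unfolding k1_def using k m' Mgrp_subset_Kgrp by (blast intro: Kgrp_mult)
  moreover have "k = k1 ** m"
  proof -
    have "m' ** m = mat 1"
      unfolding m_m'_def cmat_eq_iff cmat_mult_nth by (simp add: cis_mult)
    then show ?thesis unfolding k1_def by (simp flip: matrix_mul_assoc)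
  qed
  moreover have "norm (k1 - mat 1) \<le> 4 * cmod \<beta>"
  proof -
    define r where "r = cmod \<alpha>"
    have polar: "\<alpha> = of_real r * cis \<theta>"
      using rcis_cmod_Arg[of \<alpha>] unfolding rcis_def \<alpha>_\<beta>_\<theta>_def r_def by simp
    have entries: "k1$1$1 = of_real r" "k1$2$2 = of_real r"
      "cmod (k1$1$2) = cmod \<beta>" "cmod (k1$2$1) = cmod \<beta>"
      unfolding k1_def m_m'_def cmat_mult_nth Kgrp_entries[OF k] \<alpha>_\<beta>_\<theta>_def[symmetric] polar
      by (simp_all add: norm_mult cis_cnj cis_mult flip: mult.assoc)
    then have diff: "(k1 - mat 1)$1$1 = of_real (r - 1)" "(k1 - mat 1)$2$2 = of_real (r - 1)"
      "(k1 - mat 1)$1$2 = k1$1$2" "(k1 - mat 1)$2$1 = k1$2$1"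
      by simp_all
    have "norm (k1 - mat 1) \<le> \<bar>r - 1\<bar> + cmod \<beta> + cmod \<beta> + \<bar>r - 1\<bar>"
      using norm_cmat_le[of "k1 - mat 1"] unfolding diff norm_of_real entries(3,4) .
    moreover have "\<bar>r - 1\<bar> \<le> cmod \<beta>"
      using Kgrp_norm_square[OF k]
      by (intro abs_diff_one_le_of_squares_sum_1) (simp_all add: \<alpha>_\<beta>_\<theta>_def r_def)
    ultimately show ?thesis by linarith
  qed
  ultimately show ?thesis using m unfolding \<alpha>_\<beta>_\<theta>_def by blast
qed

lemma Kgrp_near_Mgrp_of_a_t_in_HKA:
  assumes "\<delta> > 0"
  shows "\<exists>T0. \<forall>k\<in>Kgrp. \<forall>t>T0. pmem (a_t t ** k) (Hgrp \<cdot>\<cdot> Kgrp \<cdot>\<cdot> Aplus) \<longrightarrow>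
           (\<exists>k1 m. k1 \<in> Kgrp \<and> m \<in> Mgrp \<and> k = k1 ** m \<and> norm (k1 - mat 1) < \<delta>)"
proof (intro exI[of _ "ln (4 / \<delta>)"] ballI allI impI)
  fix k t
  assume k: "k \<in> Kgrp" and "t > ln (4 / \<delta>)" and "pmem (a_t t ** k) (Hgrp \<cdot>\<cdot> Kgrp \<cdot>\<cdot> Aplus)"
  then have "4 * cmod (k$1$2) \<le> 4 * exp (-t)"
    using Kgrp_offdiag_le_of_a_t_in_HKA by simp
  also have "\<dots> < \<delta>"
  proof -
    have "4 / \<delta> < exp t"
      using exp_less_mono[OF \<open>t > ln (4 / \<delta>)\<close>] assms by simp
    then show ?thesis
      using assms by (simp add: exp_minus field_simps)
  qed
  finally show "\<exists>k1 m. k1 \<in> Kgrp \<and> m \<in> Mgrp \<and> k = k1 ** m \<and> norm (k1 - mat 1) < \<delta>"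
    using Kgrp_decomp_near_Mgrp[OF k] by fastforce
qed

theorem proposition4p2:
  fixes dG :: "complex^2^2 \<Rightarrow> complex^2^2 \<Rightarrow> real"
  assumes "psl_left_inv_metric dG"
  shows "(\<forall>t s. s > 0 \<longrightarrow> pmem (a_t t) (Hgrp \<cdot>\<cdot> Kgrp \<cdot>\<cdot> {a_t s} \<cdot>\<cdot> Kgrp) \<longrightarrow> \<bar>t\<bar> \<le> s)
       \<and> (\<forall>\<epsilon>>0. \<exists>T0. {k \<in> Kgrp. \<exists>t>T0. pmem (a_t t ** k) (Hgrp \<cdot>\<cdot> Kgrp \<cdot>\<cdot> Aplus)}
                       \<subseteq> {k. pmem k (Keps dG \<epsilon> \<cdot>\<cdot> Mgrp)})"
proof (intro conjI allI impI)
  fix t s :: real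
  assume "s > 0" "pmem (a_t t) (Hgrp \<cdot>\<cdot> Kgrp \<cdot>\<cdot> {a_t s} \<cdot>\<cdot> Kgrp)"
  then show "\<bar>t\<bar> \<le> s"
    using abs_le_of_a_t_in_HKaK by fastforce
next
  fix \<epsilon> :: real
  assume "\<epsilon> > 0"
  then obtain \<delta> where "\<delta> > 0" and close: "\<And>h. h \<in> SL2 \<Longrightarrow> norm (h - mat 1) < \<delta> \<Longrightarrow> dG (mat 1) h < \<epsilon>"
    using assms unfolding psl_left_inv_metric_def by blast
  then obtain T0 where T0: "\<And>k t. k \<in> Kgrp \<Longrightarrow> t > T0 \<Longrightarrow> pmem (a_t t ** k) (Hgrp \<cdot>\<cdot> Kgrp \<cdot>\<cdot> Aplus) \<Longrightarrow>
      \<exists>k1 m. k1 \<in> Kgrp \<and> m \<in> Mgrp \<and> k = k1 ** m \<and> norm (k1 - mat 1) < \<delta>"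
    using Kgrp_near_Mgrp_of_a_t_in_HKA by meson
  have "k \<in> Keps dG \<epsilon> \<cdot>\<cdot> Mgrp" if "k \<in> Kgrp" "t > T0" "pmem (a_t t ** k) (Hgrp \<cdot>\<cdot> Kgrp \<cdot>\<cdot> Aplus)" for k t
    using T0[OF that] close unfolding Keps_def setmul_def Kgrp_def by blast
  then show "\<exists>T0. {k \<in> Kgrp. \<exists>t>T0. pmem (a_t t ** k) (Hgrp \<cdot>\<cdot> Kgrp \<cdot>\<cdot> Aplus)}
               \<subseteq> {k. pmem k (Keps dG \<epsilon> \<cdot>\<cdot> Mgrp)}"
    unfolding pmem_def by blast
qed

end
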